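(* Let $\pi_0,\pi_1:\mathcal X\to\{0,1\}$ be measurable policies. The parameter $\mathrm{FNA}_{\pi_0\to\pi_1}$ is identifiable (i.e., its identified set $\mathcal S(\mathrm{FNA}_{\pi_0\to\pi_1};P)$ is a singleton) if and only if, for $P$-almost every $X$, at least one of the following holds: $\pi_0(X)=\pi_1(X)$, or $\operatorname{Var}_P(Y\mid X,A=0)=0$, or $\operatorname{Var}_P(Y\mid X,A=1)=0$.
   Context: Let $\mathcal X$ be a measurable covariate space. A full (unobservable) distribution $\mathbb P$ is a law of $(X,A,Y(0),Y(1))$ with $X\in\mathcal X$, $A\in\{0,1\}$, $Y(0),Y(1)\in\{0,1\}$. The coarsening map $\mathcal C(x,a,y_0,y_1)=(x,a,ay_1+(1-a)y_0)$ induces the observed-data distribution $P=\mathbb P\circ\mathcal C^{-1}$ of $(X,A,Y)$, where $Y=Y(A)$. Write $e(X)=P(A=1\mid X)$ and assume overlap: $e(X)\in(0,1)$ a.s. Let $\mu(X,a)=E_P[Y\mid X,A=a]$. For policies $\pi_0,\pi_1:\mathcal X\to\{0,1\}$, define $\mathrm{FNA}_{\pi_0\to\pi_1}(\mathbb P)=\mathbb P\big(Y(\pi_0(X))=1,\,Y(\pi_1(X))=0\big)$. For a parameter $\psi(\mathbb P)$ its identified set is $\mathcal S(\psi;P)=\{\psi(\mathbb P):\ \mathbb P\circ\mathcal C^{-1}=P,\ \mathbb P(A=1\mid X)=\mathbb P(A=1\mid X,Y(a))\text{ for }a=0,1\}$ (the last condition is unconfoundedness). The parameter is identifiable if $|\mathcal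 S(\psi;P)|=1$. *)

theory Defs
  imports "HOL-Probability.Probability"
begin

text \<open>Full data: (X, (A, Y0, Y1)) with X in the covariate space M; observed data: (X, (A, Y)).
  Policies and binary variables are encoded as bool (True = 1).\<close>

type_synonym full_out = "bool \<times> bool \<times> bool"   (* (A, Y(0), Y(1)) *)
type_synonym obs_out = "bool \<times> bool"           (* (A, Y) *)

definition full_space :: "'x measure \<Rightarrow> ('x \<times> full_out) measure" where
  "full_space M = M \<Otimes>\<^sub>M count_space UNIV"

definition obs_space :: "'x measure \<Rightarrow> ('x \<times> obs_out) measure" where
  "obs_space M = M \<Otimes>\<^sub>M count_space UNIV"

definition coarsen :: "'x \<times> full_out \<Rightarrow> 'x \<times> obs_out" where
  "coarsen = (\<lambda>(x, a, y0, y1). (x, a, if a then y1 else y0))"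

definition pot :: "bool \<Rightarrow> bool \<times> bool \<Rightarrow> bool" where
  "pot t = (\<lambda>(y0, y1). if t then y1 else y0)"

text \<open>Law on M x (finite set) given by covariate law nu and a measurable
  conditional pmf kernel k (the conditional law of the finite part given X).\<close>
definition kernel_law :: "'x measure \<Rightarrow> ('x \<Rightarrow> 'w pmf) \<Rightarrow> ('x \<times> 'w) measure" where
  "kernel_law nu k = density (nu \<Otimes>\<^sub>M count_space UNIV) (\<lambda>(x, w). ennreal (pmf (k x) w))"

definition pmf_kernel :: "'x measure \<Rightarrow> ('x \<Rightarrow> 'w pmf) \<Rightarrow> bool" where
  "pmf_kernel M k \<longleftrightarrow> (\<forall>w. (\<lambda>x. pmf (k x) w) \<in> borel_measurable M)"

definition unconf_at :: "full_out pmf \<Rightarrow> bool" where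
  "unconf_at q \<longleftrightarrow> (\<forall>t y. measure_pmf.prob q {(a, ys). pot t ys = y} > 0 \<longrightarrow>
      measure_pmf.prob q {(a, ys). a \<and> pot t ys = y} / measure_pmf.prob q {(a, ys). pot t ys = y}
        = measure_pmf.prob q {(a, ys). a})"

text \<open>A full law PP (a probability measure on the full space) is unconfounded if
  its conditional law of (A,Y(0),Y(1)) given X (which exists since the second
  component is finite and is a.e. unique) satisfies the condition a.e. in X.\<close>
definition unconfounded :: "'x measure \<Rightarrow> ('x \<times> full_out) measure \<Rightarrow> bool" where
  "unconfounded M PP \<longleftrightarrow> (\<exists>q. pmf_kernel M q \<and> PP = kernel_law (distr PP M fst) q \<and>
      (AE x in distr PP M fst. unconf_at (q x)))"

definition FNA :: "'x measure \<Rightarrow> ('x \<Rightarrow> bool) \<Rightarrow> ('x \<Rightarrow> bool) \<Rightarrow> ('x \<times> full_out) measure \<Rightarrow> real" where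
  "FNA M pi0 pi1 PP = measure PP
     {(x, a, ys). x \<in> space M \<and> pot (pi0 x) ys \<and> \<not> pot (pi1 x) ys}"

definition ident_set :: "'x measure \<Rightarrow> (('x \<times> full_out) measure \<Rightarrow> real)
     \<Rightarrow> ('x \<times> obs_out) measure \<Rightarrow> real set" where
  "ident_set M psi P = {psi PP | PP. prob_space PP \<and> sets PP = sets (full_space M) \<and>
       distr PP (obs_space M) coarsen = P \<and> unconfounded M PP}"

text \<open>Observed-law quantities computed from the conditional law r x of (A,Y) given X = x.\<close>
definition prop_score :: "('x \<Rightarrow> obs_out pmf) \<Rightarrow> 'x \<Rightarrow> real" where
  "prop_score r x = measure_pmf.prob (r x) {w. fst w}"

definition cond_mean :: "('x \<Rightarrow> obs_out pmf) \<Rightarrow> 'x \<Rightarrow> bool \<Rightarrow> real" where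
  "cond_mean r x a = (\<Sum>y\<in>UNIV. pmf (r x) (a, y) * of_bool y) / measure_pmf.prob (r x) {w. fst w = a}"

definition cond_var :: "('x \<Rightarrow> obs_out pmf) \<Rightarrow> 'x \<Rightarrow> bool \<Rightarrow> real" where
  "cond_var r x a = (\<Sum>y\<in>UNIV. pmf (r x) (a, y) * (of_bool y - cond_mean r x a)\<^sup>2)
                     / measure_pmf.prob (r x) {w. fst w = a}"

end

theory Submission
  imports Defs
begin

text \<open>Under unconfoundedness and overlap the observed law pins down, at each covariate value,
  the marginal laws of Y(0) and Y(1): P(Y(t) = 1 | X) is the mean m t of Y among units with A = t.
  It leaves their coupling open: c = P(Y(0) = Y(1) = 1 | X) can be any value in the
  Frechet-Hoeffding interval [max 0 (m0 + m1 - 1), min m0 m1], and every such c is realised by a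
  completion in which treatment is drawn independently of (Y(0), Y(1)). Where the policies disagree,
  the integrand of FNA is m (pi0 X) - c, so FNA is identified iff this interval is a.e. a single
  point on the disagreement set, i.e. iff one of the conditional means is 0 or 1, i.e. one of the
  conditional variances m (1 - m) vanishes.\<close>

lemma sum_UNIV_prod:
  "(\<Sum>w\<in>(UNIV :: ('a::finite \<times> 'b::finite) set). f w) = (\<Sum>a\<in>UNIV. \<Sum>b\<in>UNIV. f (a, b))"
  by (simp add: sum.cartesian_product flip: UNIV_Times_UNIV)

lemma measure_pmf_eq_sum_UNIV:
  "measure_pmf.prob p A = (\<Sum>w\<in>UNIV. pmf p w * indicator A w)" for p :: "'w::finite pmf"
  by (simp add: measure_measure_pmf_finite indicator_def sum.If_cases)

lemma sum_pmf_UNIV: "(\<Sum>w\<in>UNIV. pmf p w) = 1" for p :: "'w::finite pmf"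
  using measure_pmf_eq_sum_UNIV[of p UNIV] by simp

lemma sum_UNIV_bool: "(\<Sum>b\<in>UNIV. f b) = f False + f True"
  by (simp add: UNIV_bool)

lemmas expand_finite_pmf = measure_pmf_eq_sum_UNIV sum_UNIV_prod sum_UNIV_bool

lemmas measure_pair_pmf_Times = measure_pmf_prob_product[OF countableI_type countableI_type]

lemma bernoulli_variance:
  fixes a b :: real
  defines "m \<equiv> a / (a + b)"
  shows "(b * m\<^sup>2 + a * (1 - m)\<^sup>2) / (a + b) = m * (1 - m)"
proof (cases "a + b = 0")
  case False
  define s where "s = a + b"
  have a: "a = m * s" and b: "b = (1 - m) * s"
    using False by (simp_all add: m_def s_def field_simps)
  have "b * m\<^sup>2 + a * (1 - m)\<^sup>2 = s * (m * (1 - m))"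
    unfolding a b by (simp add: power2_eq_square algebra_simps)
  with False show ?thesis by (simp add: s_def)
qed (simp add: m_def)

definition observe :: "full_out \<Rightarrow> obs_out" where
  "observe = (\<lambda>(a, ys). (a, pot a ys))"

lemma pmf_map_observe:
  "pmf (map_pmf observe q) (t, y) = measure_pmf.prob q {(a, ys). a = t \<and> pot t ys = y}"
proof -
  have "observe -` {(t, y)} = {(a, ys). a = t \<and> pot t ys = y}"
    by (auto simp: observe_def)
  then show ?thesis by (simp add: pmf_map)
qed

lemma prob_treatment_map_observe:
  "measure_pmf.prob (map_pmf observe q) {w. fst w = t} = measure_pmf.prob q {(a, ys). a = t}"
proof -
  have "observe -` {w. fst w = t} = {(a, ys). a = t}"
    by (auto simp: observe_def)
  then show ?thesis by simp
qed

text \<open>As in cond_mean, the mean is 0 when P(A = t) = 0.\<close>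
definition outcome_mean :: "obs_out pmf \<Rightarrow> bool \<Rightarrow> real" where
  "outcome_mean p t = pmf p (t, True) / measure_pmf.prob p {w. fst w = t}"

lemma prob_treatment_eq: "measure_pmf.prob p {w. fst w = t} = pmf p (t, True) + pmf p (t, False)"
  for p :: "obs_out pmf"
  by (cases t) (simp_all add: expand_finite_pmf)

lemma outcome_mean_bounds: "0 \<le> outcome_mean p t" "outcome_mean p t \<le> 1"
  by (simp_all add: outcome_mean_def prob_treatment_eq divide_le_eq_1 add_nonneg_pos)
    (smt (verit) pmf_nonneg)

lemma pmf_treated_success_eq:
  "pmf p (t, True) = measure_pmf.prob p {w. fst w = t} * outcome_mean p t"
  by (cases "measure_pmf.prob p {w. fst w = t} = 0")
    (auto simp: outcome_mean_def prob_treatment_eq add_nonneg_eq_0_iff)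

lemma overlap_imp_treatment_pos:
  fixes p :: "obs_out pmf"
  assumes "0 < measure_pmf.prob p {w. fst w}" "measure_pmf.prob p {w. fst w} < 1"
  shows "0 < measure_pmf.prob p {w. fst w = t}"
  using assms sum_pmf_UNIV[of p] prob_treatment_eq[of p True] prob_treatment_eq[of p False]
  by (cases t) (simp_all add: sum_UNIV_prod sum_UNIV_bool)

lemma cond_mean_eq_outcome_mean: "cond_mean r x t = outcome_mean (r x) t"
  by (simp add: cond_mean_def outcome_mean_def UNIV_bool)

lemma cond_var_eq_outcome_mean:
  "cond_var r x t = outcome_mean (r x) t * (1 - outcome_mean (r x) t)"
proof -
  let ?a = "pmf (r x) (t, True)" and ?b = "pmf (r x) (t, False)"
  have "cond_var r x t = (?b * (?a / (?a + ?b))\<^sup>2 + ?a * (1 - ?a / (?a + ?b))\<^sup>2) / (?a + ?b)"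
    by (simp add: cond_var_def cond_mean_eq_outcome_mean outcome_mean_def prob_treatment_eq UNIV_bool)
  then show ?thesis
    by (simp add: bernoulli_variance outcome_mean_def prob_treatment_eq)
qed

section \<open>Harm probability and its identification\<close>

definition joint_success :: "full_out pmf \<Rightarrow> real" where
  "joint_success q = measure_pmf.prob q {(a, y0, y1). y0 \<and> y1}"

definition harm_event :: "bool \<Rightarrow> bool \<Rightarrow> full_out set" where
  "harm_event t0 t1 = {(a, ys). pot t0 ys \<and> \<not> pot t1 ys}"

lemma prob_harm_eq:
  "measure_pmf.prob q (harm_event t0 t1) =
     (if t0 = t1 then 0 else measure_pmf.prob q {(a, ys). pot t0 ys} - joint_success q)"
  unfolding harm_event_def joint_success_def expand_finite_pmf
  by (cases t0; cases t1) (simp_all add: pot_def)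

definition frechet_interval :: "real \<Rightarrow> real \<Rightarrow> real set" where
  "frechet_interval m0 m1 = {max 0 (m0 + m1 - 1) .. min m0 m1}"

lemma frechet_interval_degenerate_iff:
  fixes m0 m1 :: real
  assumes "0 \<le> m0" "m0 \<le> 1" "0 \<le> m1" "m1 \<le> 1"
  shows "max 0 (m0 + m1 - 1) = min m0 m1 \<longleftrightarrow> m0 = 0 \<or> m0 = 1 \<or> m1 = 0 \<or> m1 = 1"
proof
  assume eq: "max 0 (m0 + m1 - 1) = min m0 m1"
  show "m0 = 0 \<or> m0 = 1 \<or> m1 = 0 \<or> m1 = 1"
  proof (cases "m0 + m1 \<le> 1")
    case True
    then have "min m0 m1 = 0" using eq by simp
    then show ?thesis by (auto simp: min_def split: if_splits)
  next
    case False
    then have "m0 + m1 - 1 = min m0 m1" using eq by (simp add: max_def)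
    then show ?thesis by (auto simp: min_def split: if_splits)
  qed
qed (use assms in auto)

lemma joint_success_mem_frechet_interval:
  fixes q :: "full_out pmf"
  shows "joint_success q \<in>
    frechet_interval (measure_pmf.prob q {(a, ys). pot False ys})
      (measure_pmf.prob q {(a, ys). pot True ys})"
  using sum_pmf_UNIV[of q]
  unfolding frechet_interval_def joint_success_def expand_finite_pmf
  by (simp add: pot_def) (smt (verit) pmf_nonneg)

lemma unconf_at_indep:
  fixes q :: "full_out pmf"
  assumes "unconf_at q"
  shows "measure_pmf.prob q {(a, ys). a = s \<and> pot t ys = y} =
    measure_pmf.prob q {(a, ys). a = s} * measure_pmf.prob q {(a, ys). pot t ys = y}"
proof -
  let ?P = "measure_pmf.prob q" and ?E = "{(a, ys). pot t ys = y}"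
  have treated: "?P {(a, ys). a \<and> pot t ys = y} = ?P {(a, ys). a} * ?P ?E"
  proof (cases "?P ?E = 0")
    case True
    moreover have "?P {(a, ys). a \<and> pot t ys = y} \<le> ?P ?E"
      by (rule measure_pmf.finite_measure_mono) auto
    ultimately show ?thesis by (simp add: measure_le_0_iff)
  next
    case False
    then have "0 < ?P ?E" by (simp add: zero_less_measure_iff)
    with assms show ?thesis by (simp add: unconf_at_def divide_eq_eq)
  qed
  show ?thesis
  proof (cases s)
    case False
    have eqs: "{(a, ys). a = s \<and> pot t ys = y} = ?E - {(a, ys). a \<and> pot t ys = y}"
      "{(a, ys). a = s} = UNIV - {(a, ys). a}"
      using False by auto
    have "?P (?E - {(a, ys). a \<and> pot t ys = y}) = ?P ?E - ?P {(a, ys). a \<and> pot t ys = y}"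
      by (rule measure_pmf.finite_measure_Diff) auto
    moreover have "?P (UNIV - {(a, ys). a}) = 1 - ?P {(a, ys). a}"
      using measure_pmf.prob_compl[of "{(a, ys). a}" q] by simp
    ultimately show ?thesis
      unfolding eqs using treated by (simp add: left_diff_distrib)
  qed (use treated in simp)
qed

lemma prob_pot_eq_outcome_mean:
  assumes "map_pmf observe q = p" "unconf_at q" "0 < measure_pmf.prob p {w. fst w = t}"
  shows "measure_pmf.prob q {(a, ys). pot t ys} = outcome_mean p t"
proof -
  have "measure_pmf.prob p {w. fst w = t} * outcome_mean p t = pmf p (t, True)"
    by (simp add: pmf_treated_success_eq)
  also have "\<dots> = measure_pmf.prob p {w. fst w = t} * measure_pmf.prob q {(a, ys). pot t ys}"
    using unconf_at_indep[OF assms(2), of t t True] pmf_map_observe[of q t True]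
      prob_treatment_map_observe[of q t] assms(1) by simp
  finally show ?thesis using assms(3) by simp
qed

lemma joint_success_mem_frechet_interval_outcome_mean:
  assumes "map_pmf observe q = p" "unconf_at q" "\<And>t. 0 < measure_pmf.prob p {w. fst w = t}"
  shows "joint_success q \<in> frechet_interval (outcome_mean p False) (outcome_mean p True)"
  using joint_success_mem_frechet_interval[of q] prob_pot_eq_outcome_mean[OF assms] by simp

lemma prob_harm_identified:
  assumes "map_pmf observe q = p" "unconf_at q" "\<And>t. 0 < measure_pmf.prob p {w. fst w = t}"
  shows "measure_pmf.prob q (harm_event t0 t1) =
    (if t0 = t1 then 0 else outcome_mean p t0 - joint_success q)"
  using prob_pot_eq_outcome_mean[OF assms] by (simp add: prob_harm_eq)

section \<open>Unconfounded completions of an observed law\<close>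

text \<open>The law of (Y(0), Y(1)) with marginals m0, m1 and P(Y(0) = Y(1) = 1) = c; its four cell
  probabilities are nonnegative exactly when c lies in the Frechet interval.\<close>
definition coupling_pmf :: "real \<Rightarrow> real \<Rightarrow> real \<Rightarrow> (bool \<times> bool) pmf" where
  "coupling_pmf m0 m1 c = embed_pmf (\<lambda>(y0, y1).
     if y0 then if y1 then c else m0 - c else if y1 then m1 - c else 1 - m0 - m1 + c)"

lemma pmf_coupling_pmf:
  assumes "c \<in> frechet_interval m0 m1"
  shows "pmf (coupling_pmf m0 m1 c) (y0, y1) =
    (if y0 then if y1 then c else m0 - c else if y1 then m1 - c else 1 - m0 - m1 + c)"
  unfolding coupling_pmf_def
proof (subst pmf_embed_pmf)
  let ?f = "\<lambda>(y0, y1).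
    if y0 then if y1 then c else m0 - c else if y1 then m1 - c else 1 - m0 - m1 + c"
  show nonneg: "0 \<le> ?f w" for w
    using assms by (auto simp: frechet_interval_def split: prod.split)
  have "(\<integral>\<^sup>+w. ennreal (?f w) \<partial>count_space UNIV) = ennreal (\<Sum>w\<in>UNIV. ?f w)"
    using nonneg by (simp add: nn_integral_count_space_finite sum_ennreal)
  also have "(\<Sum>w\<in>UNIV. ?f w) = 1"
    by (simp add: sum_UNIV_prod sum_UNIV_bool)
  finally show "(\<integral>\<^sup>+w. ennreal (?f w) \<partial>count_space UNIV) = 1" by simp
qed simp

lemma prob_coupling_pmf_pot:
  assumes "c \<in> frechet_interval m0 m1"
  shows "measure_pmf.prob (coupling_pmf m0 m1 c) {ys. pot t ys} = (if t then m1 else m0)"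
  unfolding expand_finite_pmf by (simp add: pmf_coupling_pmf[OF assms] pot_def)

lemma prob_coupling_pmf_joint:
  assumes "c \<in> frechet_interval m0 m1"
  shows "measure_pmf.prob (coupling_pmf m0 m1 c) {(y0, y1). y0 \<and> y1} = c"
  unfolding expand_finite_pmf by (simp add: pmf_coupling_pmf[OF assms])

lemma unconf_at_pair_pmf: "unconf_at (pair_pmf A Y)"
proof -
  have "measure_pmf.prob (pair_pmf A Y) {(a, ys). a \<and> pot t ys = y} =
      measure_pmf.prob (pair_pmf A Y) {(a, ys). a} *
      measure_pmf.prob (pair_pmf A Y) {(a, ys). pot t ys = y}"
    for t y
  proof -
    have eqs: "{(a, ys). a \<and> pot t ys = y} = {True} \<times> {ys. pot t ys = y}"
      "{(a, ys). a} = {True} \<times> (UNIV :: (bool \<times> bool) set)"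
      "{(a, ys). pot t ys = y} = UNIV \<times> {ys. pot t ys = y}"
      by auto
    show ?thesis unfolding eqs measure_pair_pmf_Times by simp
  qed
  then show ?thesis by (simp add: unconf_at_def)
qed

definition unconfounded_completion :: "obs_out pmf \<Rightarrow> real \<Rightarrow> full_out pmf" where
  "unconfounded_completion p c =
     pair_pmf (map_pmf fst p) (coupling_pmf (outcome_mean p False) (outcome_mean p True) c)"

lemma map_pmf_observe_unconfounded_completion:
  assumes "c \<in> frechet_interval (outcome_mean p False) (outcome_mean p True)"
  shows "map_pmf observe (unconfounded_completion p c) = p"
proof (rule pmf_eqI)
  fix w :: obs_out
  obtain t y where w: "w = (t, y)" by (cases w)
  let ?Y = "coupling_pmf (outcome_mean p False) (outcome_mean p True) c"
  have A: "measure_pmf.prob (map_pmf fst p) {t} = measure_pmf.prob p {w. fst w = t}"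
    by (simp add: vimage_def)
  have Y: "measure_pmf.prob ?Y {ys. pot t ys} = outcome_mean p t"
    using prob_coupling_pmf_pot[OF assms] by simp
  have "{(a, ys). a = t \<and> pot t ys = y} = {t} \<times> {ys. pot t ys = y}" by auto
  then have "pmf (map_pmf observe (unconfounded_completion p c)) w =
      measure_pmf.prob p {w. fst w = t} * measure_pmf.prob ?Y {ys. pot t ys = y}"
    unfolding w pmf_map_observe unconfounded_completion_def
    by (simp only: measure_pair_pmf_Times A)
  also have "\<dots> = pmf p w"
  proof (cases y)
    case True
    then show ?thesis using Y by (simp add: w pmf_treated_success_eq)
  next
    case False
    have "{ys. pot t ys = y} = UNIV - {ys. pot t ys}" using False by auto
    then have "measure_pmf.prob ?Y {ys. pot t ys = y} = 1 - outcome_mean p t"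
      using measure_pmf.prob_compl[of "{ys. pot t ys}" ?Y] Y by simp
    then show ?thesis
      using False pmf_treated_success_eq[of p t] prob_treatment_eq[of p t]
      by (simp add: w right_diff_distrib)
  qed
  finally show "pmf (map_pmf observe (unconfounded_completion p c)) w = pmf p w" .
qed

lemma unconf_at_unconfounded_completion: "unconf_at (unconfounded_completion p c)"
  unfolding unconfounded_completion_def by (rule unconf_at_pair_pmf)

lemma prob_harm_unconfounded_completion:
  assumes "c \<in> frechet_interval (outcome_mean p False) (outcome_mean p True)"
  shows "measure_pmf.prob (unconfounded_completion p c) (harm_event t0 t1) =
    (if t0 = t1 then 0 else outcome_mean p t0 - c)"
proof -
  have pot: "{(a, ys). pot t0 ys} = UNIV \<times> {ys. pot t0 ys}"
    and joint: "{(a, y0, y1). y0 \<and> y1} = UNIV \<times> {(y0, y1). y0 \<and> y1}"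
    by auto
  show ?thesis
    unfolding prob_harm_eq joint_success_def unconfounded_completion_def pot joint
      measure_pair_pmf_Times prob_coupling_pmf_joint[OF assms]
    by (simp add: prob_coupling_pmf_pot[OF assms])
qed

definition joint_lower :: "obs_out pmf \<Rightarrow> real" where
  "joint_lower p = max 0 (outcome_mean p False + outcome_mean p True - 1)"

definition joint_upper :: "obs_out pmf \<Rightarrow> real" where
  "joint_upper p = min (outcome_mean p False) (outcome_mean p True)"

lemma joint_bounds_mem_frechet_interval:
  "joint_lower p \<in> frechet_interval (outcome_mean p False) (outcome_mean p True)"
  "joint_upper p \<in> frechet_interval (outcome_mean p False) (outcome_mean p True)"
  using outcome_mean_bounds[of p] by (auto simp: frechet_interval_def joint_lower_def joint_upper_def)

lemma joint_lower_eq_upper_iff_cond_var: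
  "joint_lower (r x) = joint_upper (r x) \<longleftrightarrow> cond_var r x False = 0 \<or> cond_var r x True = 0"
  unfolding joint_lower_def joint_upper_def cond_var_eq_outcome_mean
  using frechet_interval_degenerate_iff[OF outcome_mean_bounds outcome_mean_bounds] by auto

lemma joint_success_eq_joint_upper:
  assumes "map_pmf observe q = p" "unconf_at q" "\<And>t. 0 < measure_pmf.prob p {w. fst w = t}"
    and "joint_lower p = joint_upper p"
  shows "joint_success q = joint_upper p"
proof -
  have "joint_lower p \<le> joint_success q" "joint_success q \<le> joint_upper p"
    using joint_success_mem_frechet_interval_outcome_mean[OF assms(1-3)]
    unfolding joint_lower_def joint_upper_def frechet_interval_def atLeastAtMost_iff by simp_all
  then show ?thesis using assms(4) by linarith
qed

section \<open>Laws given by a covariate law and a pmf kernel\<close>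

lemma pmf_kernel_cong_sets:
  assumes "sets nu = sets M"
  shows "pmf_kernel nu k \<longleftrightarrow> pmf_kernel M k"
  unfolding pmf_kernel_def measurable_cong_sets[OF assms refl] ..

lemma borel_measurable_kernel_density:
  assumes "pmf_kernel nu k"
  shows "(\<lambda>(x, w). ennreal (pmf (k x) w))
    \<in> borel_measurable (nu \<Otimes>\<^sub>M count_space (UNIV :: 'w::countable set))"
proof -
  have k: "(\<lambda>x. pmf (k x) w) \<in> borel_measurable nu" for w
    using assms by (simp add: pmf_kernel_def)
  have "(\<lambda>z. ennreal (pmf (k (fst z)) (snd z))) \<in> borel_measurable (nu \<Otimes>\<^sub>M count_space UNIV)"
    by (rule measurable_compose_countable[where f = "\<lambda>w z. ennreal (pmf (k (fst z)) w)"])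
      (use k in measurable)
  then show ?thesis by (simp add: case_prod_beta')
qed

lemma sets_kernel_law [simp]: "sets (kernel_law nu k) = sets (nu \<Otimes>\<^sub>M count_space UNIV)"
  by (simp add: kernel_law_def)

lemma space_kernel_law [simp]: "space (kernel_law nu k) = space nu \<times> UNIV"
  by (simp add: kernel_law_def space_pair_measure)

lemma emeasure_kernel_law:
  assumes k: "pmf_kernel nu k" and S: "S \<in> sets (nu \<Otimes>\<^sub>M count_space (UNIV :: 'w::countable set))"
  shows "emeasure (kernel_law nu k) S = (\<integral>\<^sup>+x. emeasure (k x) (Pair x -` S) \<partial>nu)"
proof -
  interpret sigma_finite_measure "count_space (UNIV :: 'w set)"
    by (rule sigma_finite_measure_count_space)
  have integrand: "(\<lambda>z. (case z of (x, w) \<Rightarrow> ennreal (pmf (k x) w)) * indicator S z)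
      \<in> borel_measurable (nu \<Otimes>\<^sub>M count_space UNIV)"
    using borel_measurable_kernel_density[OF k] S by measurable
  have "emeasure (kernel_law nu k) S =
      (\<integral>\<^sup>+z. (case z of (x, w) \<Rightarrow> ennreal (pmf (k x) w)) * indicator S z \<partial>(nu \<Otimes>\<^sub>M count_space UNIV))"
    unfolding kernel_law_def using borel_measurable_kernel_density[OF k] S
    by (simp add: emeasure_density)
  also have "\<dots> = (\<integral>\<^sup>+x. \<integral>\<^sup>+w. ennreal (pmf (k x) w) * indicator S (x, w) \<partial>count_space UNIV \<partial>nu)"
    using nn_integral_fst[OF integrand, symmetric] by simp
  also have "\<dots> = (\<integral>\<^sup>+x. emeasure (k x) (Pair x -` S) \<partial>nu)"
    by (simp add: nn_integral_measure_pmf indicator_def flip: nn_integral_indicator)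
  finally show ?thesis .
qed

lemma prob_space_kernel_law:
  assumes "prob_space nu" "pmf_kernel nu k"
  shows "prob_space (kernel_law nu (k :: 'x \<Rightarrow> 'w::countable pmf))"
proof
  have "space nu \<times> UNIV \<in> sets (nu \<Otimes>\<^sub>M count_space (UNIV :: 'w set))"
    by (metis sets.top space_count_space space_pair_measure)
  then have "emeasure (kernel_law nu k) (space (kernel_law nu k)) =
      (\<integral>\<^sup>+x. emeasure (k x) (Pair x -` (space nu \<times> UNIV)) \<partial>nu)"
    using emeasure_kernel_law[OF assms(2)] by simp
  also have "\<dots> = (\<integral>\<^sup>+x. 1 \<partial>nu)"
    by (intro nn_integral_cong) (simp add: measure_pmf.emeasure_space_1[simplified])
  also have "\<dots> = 1"
    using assms(1) by (simp add: prob_space.emeasure_space_1)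
  finally show "emeasure (kernel_law nu k) (space (kernel_law nu k)) = 1" .
qed

lemma distr_fst_kernel_law:
  assumes "sets nu = sets M" "pmf_kernel nu k"
  shows "distr (kernel_law nu (k :: 'x \<Rightarrow> 'w::countable pmf)) M fst = nu"
proof (rule measure_eqI)
  fix B assume "B \<in> sets (distr (kernel_law nu k) M fst)"
  then have B: "B \<in> sets nu" using assms(1) by simp
  have "fst \<in> kernel_law nu k \<rightarrow>\<^sub>M M"
    unfolding measurable_cong_sets[OF sets_kernel_law assms(1)[symmetric]] by (rule measurable_fst)
  moreover have "fst -` B \<inter> space (kernel_law nu k) = B \<times> UNIV"
    using sets.sets_into_space[OF B] by auto
  moreover have "B \<times> UNIV \<in> sets (nu \<Otimes>\<^sub>M count_space (UNIV :: 'w set))"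
    using B by (metis pair_measureI sets_UNIV space_count_space sets.top)
  ultimately have "emeasure (distr (kernel_law nu k) M fst) B =
      (\<integral>\<^sup>+x. emeasure (k x) (Pair x -` (B \<times> UNIV)) \<partial>nu)"
    using B assms(1) by (simp add: emeasure_distr emeasure_kernel_law[OF assms(2)])
  also have "\<dots> = (\<integral>\<^sup>+x. indicator B x \<partial>nu)"
    by (intro nn_integral_cong) (simp add: indicator_def measure_pmf.emeasure_space_1[simplified])
  also have "\<dots> = emeasure nu B"
    using B by simp
  finally show "emeasure (distr (kernel_law nu k) M fst) B = emeasure nu B" .
qed (use assms(1) in simp)

lemma borel_measurable_prob_kernel:
  fixes k :: "'x \<Rightarrow> 'w::finite pmf"
  assumes "pmf_kernel nu k"
  shows "(\<lambda>x. measure_pmf.prob (k x) A) \<in> borel_measurable nu"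
  using assms unfolding measure_pmf_eq_sum_UNIV pmf_kernel_def
  by (intro borel_measurable_sum borel_measurable_times) auto

lemma pmf_kernel_map_pmf:
  "pmf_kernel nu k \<Longrightarrow> pmf_kernel nu (\<lambda>x. map_pmf f (k x))" for k :: "'x \<Rightarrow> 'w::finite pmf"
  unfolding pmf_kernel_def[of _ "\<lambda>x. map_pmf f (k x)"] pmf_map
  by (blast intro: borel_measurable_prob_kernel)

lemma distr_kernel_law_map:
  fixes k :: "'x \<Rightarrow> 'w::finite pmf" and f :: "'w \<Rightarrow> 'v::finite"
  assumes N: "sets N = sets (nu \<Otimes>\<^sub>M count_space UNIV)" and k: "pmf_kernel nu k"
  shows "distr (kernel_law nu k) N (\<lambda>(x, w). (x, f w)) = kernel_law nu (\<lambda>x. map_pmf f (k x))"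
proof (rule measure_eqI)
  fix S assume "S \<in> sets (distr (kernel_law nu k) N (\<lambda>(x, w). (x, f w)))"
  then have S: "S \<in> sets (nu \<Otimes>\<^sub>M count_space UNIV)" using N by simp
  let ?g = "\<lambda>(x, w). (x, f w)"
  have g: "?g \<in> kernel_law nu k \<rightarrow>\<^sub>M N"
    unfolding measurable_cong_sets[OF sets_kernel_law N] by measurable
  then have pre: "?g -` S \<inter> space (kernel_law nu k) \<in> sets (nu \<Otimes>\<^sub>M count_space UNIV)"
    using measurable_sets[OF g] S N by simp
  have "emeasure (distr (kernel_law nu k) N ?g) S =
      emeasure (kernel_law nu k) (?g -` S \<inter> space (kernel_law nu k))"
    using g S N by (simp add: emeasure_distr)
  also have "\<dots> = (\<integral>\<^sup>+x. emeasure (k x) (Pair x -` (?g -` S \<inter> space (kernel_law nu k))) \<partial>nu)"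
    by (rule emeasure_kernel_law[OF k pre])
  also have "\<dots> = (\<integral>\<^sup>+x. emeasure (map_pmf f (k x)) (Pair x -` S) \<partial>nu)"
  proof (rule nn_integral_cong)
    fix x assume "x \<in> space nu"
    then have "Pair x -` (?g -` S \<inter> space (kernel_law nu k)) = f -` (Pair x -` S)"
      by auto
    then show "emeasure (k x) (Pair x -` (?g -` S \<inter> space (kernel_law nu k))) =
        emeasure (map_pmf f (k x)) (Pair x -` S)"
      by (simp add: emeasure_map_pmf)
  qed
  also have "\<dots> = emeasure (kernel_law nu (\<lambda>x. map_pmf f (k x))) S"
    by (rule emeasure_kernel_law[symmetric, OF pmf_kernel_map_pmf[OF k] S])
  finally show "emeasure (distr (kernel_law nu k) N ?g) S =
      emeasure (kernel_law nu (\<lambda>x. map_pmf f (k x))) S" .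
qed (use N in simp)

lemma kernel_law_AE_unique:
  fixes k1 k2 :: "'x \<Rightarrow> 'w::countable pmf"
  assumes "prob_space nu" "pmf_kernel nu k1" "pmf_kernel nu k2" "kernel_law nu k1 = kernel_law nu k2"
  shows "AE x in nu. k1 x = k2 x"
proof -
  interpret prob_space nu by fact
  have "AE x in nu. pmf (k1 x) w = pmf (k2 x) w" for w
  proof -
    have point: "emeasure (kernel_law nu k) (B \<times> {w}) = emeasure (density nu (\<lambda>x. pmf (k x) w)) B"
      if "pmf_kernel nu k" "B \<in> sets nu" for k :: "'x \<Rightarrow> 'w pmf" and B
    proof -
      have "B \<times> {w} \<in> sets (nu \<Otimes>\<^sub>M count_space (UNIV :: 'w set))" using that(2) by auto
      then have "emeasure (kernel_law nu k) (B \<times> {w}) =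
          (\<integral>\<^sup>+x. emeasure (k x) (Pair x -` (B \<times> {w})) \<partial>nu)"
        by (rule emeasure_kernel_law[OF that(1)])
      also have "\<dots> = (\<integral>\<^sup>+x. ennreal (pmf (k x) w) * indicator B x \<partial>nu)"
        by (intro nn_integral_cong) (simp add: indicator_def emeasure_pmf_single)
      finally show ?thesis using that by (simp add: emeasure_density pmf_kernel_def)
    qed
    have "density nu (\<lambda>x. pmf (k1 x) w) = density nu (\<lambda>x. pmf (k2 x) w)"
      by (rule measure_eqI) (simp_all add: point[symmetric] assms(2-4))
    then have "AE x in nu. ennreal (pmf (k1 x) w) = ennreal (pmf (k2 x) w)"
      by (rule density_unique[rotated 2]) (use assms(2,3) in \<open>auto simp: pmf_kernel_def\<close>)
    then show ?thesis by eventually_elim simp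
  qed
  then have "AE x in nu. \<forall>w. pmf (k1 x) w = pmf (k2 x) w" by (simp add: AE_all_countable)
  then show ?thesis by eventually_elim (simp add: pmf_eqI)
qed

section \<open>FNA and its identified set\<close>

lemma coarsen_eq: "coarsen = (\<lambda>(x, w). (x, observe w))"
  by (auto simp: coarsen_def observe_def pot_def)

lemma distr_coarsen_kernel_law:
  assumes "sets nu = sets M" "pmf_kernel nu q"
  shows "distr (kernel_law nu q) (obs_space M) coarsen = kernel_law nu (\<lambda>x. map_pmf observe (q x))"
  unfolding coarsen_eq
  by (rule distr_kernel_law_map[OF _ assms(2)])
    (simp add: obs_space_def sets_pair_measure_cong[OF assms(1)[symmetric] refl])

lemma sets_full_space_cong: "sets nu = sets M \<Longrightarrow> sets (nu \<Otimes>\<^sub>M count_space UNIV) = sets (full_space M)"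
  unfolding full_space_def by (rule sets_pair_measure_cong) simp_all

lemma borel_measurable_prob_harm:
  fixes q :: "'x \<Rightarrow> full_out pmf"
  assumes "pmf_kernel nu q" "pi0 \<in> nu \<rightarrow>\<^sub>M count_space UNIV" "pi1 \<in> nu \<rightarrow>\<^sub>M count_space UNIV"
  shows "(\<lambda>x. measure_pmf.prob (q x) (harm_event (pi0 x) (pi1 x))) \<in> borel_measurable nu"
proof -
  have "(\<lambda>x. measure_pmf.prob (q x) (harm_event t0 (pi1 x))) \<in> borel_measurable nu" for t0
    by (rule measurable_compose_countable[OF _ assms(3)]) (rule borel_measurable_prob_kernel[OF assms(1)])
  then show ?thesis
    by (rule measurable_compose_countable[OF _ assms(2)])
qed

lemma integrable_prob_harm:
  fixes q :: "'x \<Rightarrow> full_out pmf"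
  assumes "prob_space nu" "pmf_kernel nu q" "pi0 \<in> nu \<rightarrow>\<^sub>M count_space UNIV" "pi1 \<in> nu \<rightarrow>\<^sub>M count_space UNIV"
  shows "integrable nu (\<lambda>x. measure_pmf.prob (q x) (harm_event (pi0 x) (pi1 x)))"
proof -
  interpret prob_space nu by fact
  show ?thesis
    by (rule integrable_const_bound[where B = 1]) (simp_all add: borel_measurable_prob_harm[OF assms(2-4)])
qed

lemma FNA_kernel_law:
  fixes q :: "'x \<Rightarrow> full_out pmf"
  assumes "prob_space nu" "sets nu = sets M" "pmf_kernel nu q"
    and pi0: "pi0 \<in> nu \<rightarrow>\<^sub>M count_space UNIV" and pi1: "pi1 \<in> nu \<rightarrow>\<^sub>M count_space UNIV"
  shows "FNA M pi0 pi1 (kernel_law nu q) = (\<integral>x. measure_pmf.prob (q x) (harm_event (pi0 x) (pi1 x)) \<partial>nu)"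
proof -
  have space: "space nu = space M" using assms(2) by (rule sets_eq_imp_space_eq)
  let ?S = "{(x, a, ys). x \<in> space M \<and> pot (pi0 x) ys \<and> \<not> pot (pi1 x) ys}"
  have "?S = (\<Union>w. {x \<in> space nu. w \<in> harm_event (pi0 x) (pi1 x)} \<times> {w})"
    by (auto simp: harm_event_def space)
  moreover have "{x \<in> space nu. w \<in> harm_event (pi0 x) (pi1 x)} \<in> sets nu" for w
  proof -
    note [measurable] = pi0 pi1
    show ?thesis by (cases w) (simp add: harm_event_def pot_def, measurable)
  qed
  ultimately have S: "?S \<in> sets (nu \<Otimes>\<^sub>M count_space (UNIV :: full_out set))"
    by (auto intro!: sets.countable_UN)
  have "emeasure (kernel_law nu q) ?S = (\<integral>\<^sup>+x. measure_pmf.prob (q x) (harm_event (pi0 x) (pi1 x)) \<partial>nu)"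
    unfolding emeasure_kernel_law[OF assms(3) S]
    by (intro nn_integral_cong) (auto simp: harm_event_def space measure_pmf.emeasure_eq_measure)
  also have "\<dots> = ennreal (\<integral>x. measure_pmf.prob (q x) (harm_event (pi0 x) (pi1 x)) \<partial>nu)"
    by (rule nn_integral_eq_integral[OF integrable_prob_harm[OF assms(1,3) pi0 pi1]]) simp
  finally show ?thesis
    unfolding FNA_def measure_def by (simp add: integral_nonneg)
qed

lemma integral_prob_harm_in_ident_set:
  fixes q :: "'x \<Rightarrow> full_out pmf"
  assumes "prob_space nu" "sets nu = sets M" "pmf_kernel nu q"
    and "pi0 \<in> nu \<rightarrow>\<^sub>M count_space UNIV" "pi1 \<in> nu \<rightarrow>\<^sub>M count_space UNIV"
    and "\<And>x. map_pmf observe (q x) = r x" "\<And>x. unconf_at (q x)"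
  shows "(\<integral>x. measure_pmf.prob (q x) (harm_event (pi0 x) (pi1 x)) \<partial>nu)
    \<in> ident_set M (FNA M pi0 pi1) (kernel_law nu r)"
proof -
  have "distr (kernel_law nu q) (obs_space M) coarsen = kernel_law nu r"
    using distr_coarsen_kernel_law[OF assms(2,3)] assms(6) by simp
  moreover have "unconfounded M (kernel_law nu q)"
    unfolding unconfounded_def distr_fst_kernel_law[OF assms(2,3)]
    using assms(3,7) pmf_kernel_cong_sets[OF assms(2)] by auto
  ultimately show ?thesis
    unfolding ident_set_def mem_Collect_eq
    by (intro exI[of _ "kernel_law nu q"])
      (simp add: prob_space_kernel_law[OF assms(1,3)] sets_full_space_cong[OF assms(2)]
        FNA_kernel_law[OF assms(1-5)])
qed

lemma ident_set_kernel_lawE: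
  assumes nu: "prob_space nu" "sets nu = sets M" and r: "pmf_kernel nu r"
    and pi: "pi0 \<in> nu \<rightarrow>\<^sub>M count_space UNIV" "pi1 \<in> nu \<rightarrow>\<^sub>M count_space UNIV"
    and v: "v \<in> ident_set M (FNA M pi0 pi1) (kernel_law nu r)"
  obtains q where "pmf_kernel nu q" "AE x in nu. map_pmf observe (q x) = r x \<and> unconf_at (q x)"
    "v = (\<integral>x. measure_pmf.prob (q x) (harm_event (pi0 x) (pi1 x)) \<partial>nu)"
proof -
  obtain PP where PP: "prob_space PP" "sets PP = sets (full_space M)"
      "distr PP (obs_space M) coarsen = kernel_law nu r" "unconfounded M PP" and vPP: "v = FNA M pi0 pi1 PP"
    using v by (auto simp: ident_set_def)
  define D where "D = distr PP M fst"
  obtain q where q: "pmf_kernel M q" and PPq: "PP = kernel_law D q" and un: "AE x in D. unconf_at (q x)"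
    using PP(4) unfolding unconfounded_def D_def by blast
  have D: "sets D = sets M" by (simp add: D_def)
  have qD: "pmf_kernel D q" unfolding pmf_kernel_cong_sets[OF D] by (rule q)
  have obs: "kernel_law D (\<lambda>x. map_pmf observe (q x)) = kernel_law nu r"
    using PP(3) distr_coarsen_kernel_law[OF D qD] PPq by simp
  have "D = nu"
    using distr_fst_kernel_law[OF D pmf_kernel_map_pmf[OF qD, of observe]]
      distr_fst_kernel_law[OF nu(2) r] obs by simp
  then have qnu: "pmf_kernel nu q" using qD by simp
  have "AE x in nu. map_pmf observe (q x) = r x"
    using kernel_law_AE_unique[OF nu(1) pmf_kernel_map_pmf[OF qnu] r] obs \<open>D = nu\<close> by simp
  moreover have "AE x in nu. unconf_at (q x)" using un unfolding \<open>D = nu\<close> .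
  moreover have "v = (\<integral>x. measure_pmf.prob (q x) (harm_event (pi0 x) (pi1 x)) \<partial>nu)"
    using vPP PPq \<open>D = nu\<close> FNA_kernel_law[OF nu qnu pi] by simp
  ultimately show ?thesis using qnu that by auto
qed


lemma borel_measurable_outcome_mean:
  "pmf_kernel nu r \<Longrightarrow> (\<lambda>x. outcome_mean (r x) t) \<in> borel_measurable nu"
  unfolding outcome_mean_def
  by (intro borel_measurable_divide borel_measurable_prob_kernel) (simp add: pmf_kernel_def)

lemma pmf_kernel_unconfounded_completion:
  assumes r: "pmf_kernel nu r" and c: "c \<in> {joint_lower, joint_upper}"
  shows "pmf_kernel nu (\<lambda>x. unconfounded_completion (r x) (c (r x)))"
proof -
  note [measurable] = borel_measurable_outcome_mean[OF r]
  have [measurable]: "(\<lambda>x. c (r x)) \<in> borel_measurable nu"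
    using c by (auto simp: joint_lower_def joint_upper_def)
  have [measurable]: "(\<lambda>x. pmf (map_pmf fst (r x)) a) \<in> borel_measurable nu" for a
    using pmf_kernel_map_pmf[OF r, of fst] by (simp add: pmf_kernel_def)
  have frechet: "c p \<in> frechet_interval (outcome_mean p False) (outcome_mean p True)" for p
    using c joint_bounds_mem_frechet_interval by auto
  have "(\<lambda>x. pmf (unconfounded_completion (r x) (c (r x))) (a, y0, y1)) \<in> borel_measurable nu"
    for a y0 y1
    unfolding unconfounded_completion_def pmf_pair pmf_coupling_pmf[OF frechet] by measurable
  then show ?thesis by (auto simp: pmf_kernel_def)
qed

text \<open>The FNA of the unconfounded completion whose joint success at covariate x is c (r x).\<close>
definition FNA_coupled ::
    "'x measure \<Rightarrow> ('x \<Rightarrow> obs_out pmf) \<Rightarrow> ('x \<Rightarrow> bool) \<Rightarrow> ('x \<Rightarrow> bool) \<Rightarrow>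
      (obs_out pmf \<Rightarrow> real) \<Rightarrow> real" where
  "FNA_coupled nu r pi0 pi1 c =
     (\<integral>x. (if pi0 x = pi1 x then 0 else outcome_mean (r x) (pi0 x) - c (r x)) \<partial>nu)"

lemma FNA_coupled_eq_integral_completion:
  assumes "c \<in> {joint_lower, joint_upper}"
  shows "FNA_coupled nu r pi0 pi1 c =
    (\<integral>x. measure_pmf.prob (unconfounded_completion (r x) (c (r x)))
      (harm_event (pi0 x) (pi1 x)) \<partial>nu)"
  using assms joint_bounds_mem_frechet_interval
  by (auto simp: FNA_coupled_def prob_harm_unconfounded_completion)

lemma FNA_coupled_in_ident_set:
  assumes "prob_space nu" "sets nu = sets M" "pmf_kernel nu r"
    and "pi0 \<in> nu \<rightarrow>\<^sub>M count_space UNIV" "pi1 \<in> nu \<rightarrow>\<^sub>M count_space UNIV"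
    and c: "c \<in> {joint_lower, joint_upper}"
  shows "FNA_coupled nu r pi0 pi1 c \<in> ident_set M (FNA M pi0 pi1) (kernel_law nu r)"
proof -
  have frechet: "c p \<in> frechet_interval (outcome_mean p False) (outcome_mean p True)" for p
    using c joint_bounds_mem_frechet_interval by auto
  have "FNA_coupled nu r pi0 pi1 c =
      (\<integral>x. measure_pmf.prob (unconfounded_completion (r x) (c (r x)))
        (harm_event (pi0 x) (pi1 x)) \<partial>nu)"
    by (rule FNA_coupled_eq_integral_completion[OF c])
  also have "\<dots> \<in> ident_set M (FNA M pi0 pi1) (kernel_law nu r)"
    using pmf_kernel_unconfounded_completion[OF assms(3) c]
    by (rule integral_prob_harm_in_ident_set[OF assms(1,2) _ assms(4,5)])
      (simp_all add: map_pmf_observe_unconfounded_completion[OF frechet]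
        unconf_at_unconfounded_completion)
  finally show ?thesis .
qed

lemma ident_set_subset_FNA_coupled_upper:
  assumes nu: "prob_space nu" "sets nu = sets M" and r: "pmf_kernel nu r"
    and pi: "pi0 \<in> nu \<rightarrow>\<^sub>M count_space UNIV" "pi1 \<in> nu \<rightarrow>\<^sub>M count_space UNIV"
    and overlap: "AE x in nu. 0 < prop_score r x \<and> prop_score r x < 1"
    and degenerate: "AE x in nu. pi0 x = pi1 x \<or> joint_lower (r x) = joint_upper (r x)"
  shows "ident_set M (FNA M pi0 pi1) (kernel_law nu r) \<subseteq> {FNA_coupled nu r pi0 pi1 joint_upper}"
proof
  fix v assume "v \<in> ident_set M (FNA M pi0 pi1) (kernel_law nu r)"
  then obtain q where q: "pmf_kernel nu q"
    and law: "AE x in nu. map_pmf observe (q x) = r x \<and> unconf_at (q x)"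
    and v: "v = (\<integral>x. measure_pmf.prob (q x) (harm_event (pi0 x) (pi1 x)) \<partial>nu)"
    by (rule ident_set_kernel_lawE[OF nu r pi])
  let ?U = "\<lambda>x. unconfounded_completion (r x) (joint_upper (r x))"
  have "AE x in nu. measure_pmf.prob (q x) (harm_event (pi0 x) (pi1 x)) =
      measure_pmf.prob (?U x) (harm_event (pi0 x) (pi1 x))"
    using law overlap degenerate
  proof eventually_elim
    case (elim x)
    then have pos: "0 < measure_pmf.prob (r x) {w. fst w = t}" for t
      by (simp add: prop_score_def overlap_imp_treatment_pos)
    show ?case
      using elim prob_harm_identified[OF _ _ pos] joint_success_eq_joint_upper[OF _ _ pos]
      by (auto simp: prob_harm_unconfounded_completion joint_bounds_mem_frechet_interval)
  qed
  then have "v = FNA_coupled nu r pi0 pi1 joint_upper"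
    unfolding v FNA_coupled_eq_integral_completion[of joint_upper, simplified]
    using borel_measurable_prob_harm[OF q pi]
      borel_measurable_prob_harm[OF pmf_kernel_unconfounded_completion[OF r, of joint_upper] pi]
    by (intro integral_cong_AE) simp_all
  then show "v \<in> {FNA_coupled nu r pi0 pi1 joint_upper}" by simp
qed

lemma FNA_coupled_lower_eq_upper_imp_AE:
  assumes "prob_space nu" and r: "pmf_kernel nu r"
    and pi: "pi0 \<in> nu \<rightarrow>\<^sub>M count_space UNIV" "pi1 \<in> nu \<rightarrow>\<^sub>M count_space UNIV"
    and eq: "FNA_coupled nu r pi0 pi1 joint_lower = FNA_coupled nu r pi0 pi1 joint_upper"
  shows "AE x in nu. pi0 x = pi1 x \<or> joint_lower (r x) = joint_upper (r x)"
proof -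
  define h where
    "h c x = measure_pmf.prob (unconfounded_completion (r x) (c (r x))) (harm_event (pi0 x) (pi1 x))"
    for c :: "obs_out pmf \<Rightarrow> real" and x
  have int: "integrable nu (h c)" if "c \<in> {joint_lower, joint_upper}" for c
    unfolding h_def
    by (rule integrable_prob_harm[OF assms(1) pmf_kernel_unconfounded_completion[OF r that] pi])
  have gap: "h joint_lower x - h joint_upper x =
      (if pi0 x = pi1 x then 0 else joint_upper (r x) - joint_lower (r x))" for x
    by (simp add: h_def prob_harm_unconfounded_completion joint_bounds_mem_frechet_interval)
  have lower_le_upper: "joint_lower p \<le> joint_upper p" for p
    using joint_bounds_mem_frechet_interval(1)[of p] by (simp add: frechet_interval_def joint_upper_def)
  have int_gap: "integrable nu (\<lambda>x. h joint_lower x - h joint_upper x)"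
    using int by simp
  have "(\<integral>x. h joint_lower x - h joint_upper x \<partial>nu) = 0"
    using eq int by (simp add: FNA_coupled_eq_integral_completion h_def[abs_def])
  then have "AE x in nu. h joint_lower x - h joint_upper x = 0"
    using integral_nonneg_eq_0_iff_AE[OF int_gap] lower_le_upper by (simp add: gap)
  then show ?thesis by eventually_elim (auto simp: gap split: if_splits)
qed

theorem theorem1:
  fixes M :: "'x measure" and nu :: "'x measure" and r :: "'x \<Rightarrow> obs_out pmf"
    and pi0 pi1 :: "'x \<Rightarrow> bool"
  assumes nu_prob: "prob_space nu" and nu_sets: "sets nu = sets M"
    and r_kernel: "pmf_kernel M r"
    and overlap: "AE x in nu. 0 < prop_score r x \<and> prop_score r x < 1"
    and pi0_meas: "pi0 \<in> M \<rightarrow>\<^sub>M count_space UNIV"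
    and pi1_meas: "pi1 \<in> M \<rightarrow>\<^sub>M count_space UNIV"
  shows "(\<exists>v. ident_set M (FNA M pi0 pi1) (kernel_law nu r) = {v}) \<longleftrightarrow>
         (AE x in nu. pi0 x = pi1 x \<or> cond_var r x False = 0 \<or> cond_var r x True = 0)"
proof -
  have r: "pmf_kernel nu r"
    unfolding pmf_kernel_cong_sets[OF nu_sets] by (rule r_kernel)
  have pi: "pi0 \<in> nu \<rightarrow>\<^sub>M count_space UNIV" "pi1 \<in> nu \<rightarrow>\<^sub>M count_space UNIV"
    unfolding measurable_cong_sets[OF nu_sets refl] by (fact pi0_meas pi1_meas)+
  note bounds = FNA_coupled_in_ident_set[OF nu_prob nu_sets r pi]
  show ?thesis
    unfolding joint_lower_eq_upper_iff_cond_var[symmetric]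
  proof
    assume "\<exists>v. ident_set M (FNA M pi0 pi1) (kernel_law nu r) = {v}"
    then have "FNA_coupled nu r pi0 pi1 joint_lower = FNA_coupled nu r pi0 pi1 joint_upper"
      using bounds[of joint_lower] bounds[of joint_upper] by auto
    then show "AE x in nu. pi0 x = pi1 x \<or> joint_lower (r x) = joint_upper (r x)"
      by (rule FNA_coupled_lower_eq_upper_imp_AE[OF nu_prob r pi])
  next
    assume "AE x in nu. pi0 x = pi1 x \<or> joint_lower (r x) = joint_upper (r x)"
    then have "ident_set M (FNA M pi0 pi1) (kernel_law nu r) \<subseteq>
        {FNA_coupled nu r pi0 pi1 joint_upper}"
      by (rule ident_set_subset_FNA_coupled_upper[OF nu_prob nu_sets r pi overlap])
    then show "\<exists>v. ident_set M (FNA M pi0 pi1) (kernel_law nu r) = {v}"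
      using bounds[of joint_upper] by blast
  qed
qed

end
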